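(* Let $r\in\mathfrak{b}$ have pairwise distinct diagonal entries and let $b_{11},\dots,b_{nn}\in\mathbb{C}^*$. Then $b=\sum_{\iota=1}^nE_{\iota\iota}\operatorname{diag}(b_{11},\dots,b_{nn})L^\iota(r)$ is an invertible upper triangular matrix with diagonal entries $b_{11},\dots,b_{nn}$, and $brb^{-1}=\operatorname{diag}(r_{11},\dots,r_{nn})$. Explicitly, $b_{\iota\gamma}=0$ for $\iota>\gamma$ and for $\iota<\gamma$ $$b_{\iota\gamma}=b_{\iota\iota}\Big(\frac{r_{\iota\gamma}}{r_{\iota\iota}-r_{\gamma\gamma}}+\sum_{v=1}^{\gamma-\iota-1}\sum_{\iota<k_1<\dots<k_v<\gamma}\frac{r_{\iota k_1}r_{k_v\gamma}}{(r_{\iota\iota}-r_{k_1k_1})(r_{\iota\iota}-r_{\gamma\gamma})}\prod_{u=1}^{v-1}\frac{r_{k_uk_{u+1}}}{r_{\iota\iota}-r_{k_{u+1}k_{u+1}}}\Big).$$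
   Context: $\mathfrak{b}$ is the space of upper triangular complex $n\times n$ matrices; $E_{\iota\iota}$ is the matrix unit with $1$ in position $(\iota,\iota)$. $L^\iota(r)=\big[\operatorname{tr}\prod_{k\ne\iota}(r-r_{kk}I)\big]^{-1}\prod_{k\ne\iota}(r-r_{kk}I)$. Empty sums are $0$ and empty products are $1$. *)

theory Defs
  imports "Jordan_Normal_Form.Matrix"
begin

text \<open>Matrices are Jordan_Normal_Form matrices; indices are 0-based (0..n-1).\<close>

definition mat_trace :: "'a::comm_ring_1 mat \<Rightarrow> 'a" where
  "mat_trace A = (\<Sum>i<dim_row A. A $$ (i,i))"

definition mat_unit :: "nat \<Rightarrow> nat \<Rightarrow> nat \<Rightarrow> 'a::{zero,one} mat" where
  "mat_unit n i j = mat n n (\<lambda>(a,b). if a = i \<and> b = j then 1 else 0)"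

definition mat_sum_list :: "nat \<Rightarrow> (nat \<Rightarrow> 'a::comm_ring_1 mat) \<Rightarrow> nat list \<Rightarrow> 'a mat" where
  "mat_sum_list n f xs = foldr (\<lambda>i A. f i + A) xs (0\<^sub>m n n)"

definition mat_prod_list :: "nat \<Rightarrow> (nat \<Rightarrow> 'a::comm_ring_1 mat) \<Rightarrow> nat list \<Rightarrow> 'a mat" where
  "mat_prod_list n f xs = foldr (\<lambda>i A. f i * A) xs (1\<^sub>m n)"

definition Lprod :: "nat \<Rightarrow> 'a::comm_ring_1 mat \<Rightarrow> 'a mat" where
  "Lprod \<iota> r = mat_prod_list (dim_row r)
      (\<lambda>k. r - r $$ (k,k) \<cdot>\<^sub>m 1\<^sub>m (dim_row r)) (filter (\<lambda>k. k \<noteq> \<iota>) [0..<dim_row r])"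

definition Lmat :: "nat \<Rightarrow> 'a::field mat \<Rightarrow> 'a mat" where
  "Lmat \<iota> r = inverse (mat_trace (Lprod \<iota> r)) \<cdot>\<^sub>m Lprod \<iota> r"

end

theory Submission
  imports Defs "Jordan_Normal_Form.Determinant"
begin

text \<open>Write \<open>M\<^sub>k = r - r\<^sub>k\<^sub>k I\<close>. For triangular \<open>r\<close> these factors commute and their full
  product vanishes (Cayley--Hamilton for triangular matrices, checked column by column). Hence
  \<open>P\<^sub>\<iota> = \<Prod>\<^sub>k\<^sub>\<noteq>\<^sub>\<iota> M\<^sub>k\<close> satisfies \<open>P\<^sub>\<iota> r = r\<^sub>\<iota>\<^sub>\<iota> P\<^sub>\<iota>\<close>; moreover \<open>P\<^sub>\<iota>\<close> is triangular and its only
  nonzero diagonal entry sits at \<open>(\<iota>,\<iota>)\<close>, so that entry is its trace. Row \<open>\<iota>\<close> of \<open>b\<close> is row \<open>\<iota>\<close>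
  of \<open>P\<^sub>\<iota>\<close> rescaled to diagonal entry \<open>b\<^sub>\<iota>\<^sub>\<iota>\<close>; thus \<open>b r = diag(r\<^sub>1\<^sub>1,\<dots>,r\<^sub>n\<^sub>n) b\<close> and \<open>b\<close> is
  triangular with nonzero diagonal, hence invertible. Reading \<open>b r = diag(\<dots>) b\<close> in row \<open>\<iota>\<close>
  gives \<open>(r\<^sub>\<iota>\<^sub>\<iota> - r\<^sub>\<gamma>\<^sub>\<gamma>) b\<^sub>\<iota>\<^sub>\<gamma> = \<Sum> b\<^sub>\<iota>\<^sub>j r\<^sub>j\<^sub>\<gamma>\<close> (over \<open>\<iota> \<le> j < \<gamma>\<close>), a recursion in \<open>\<gamma>\<close> whose unique solution
  is the sum over all chains \<open>\<iota> < k\<^sub>1 < \<dots> < k\<^sub>v < \<gamma>\<close> of products of the ratios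
  \<open>r\<^sub>x\<^sub>y / (r\<^sub>\<iota>\<^sub>\<iota> - r\<^sub>y\<^sub>y)\<close> along the chain.\<close>

lemma index_mult_mat_sum:
  "A \<in> carrier_mat m n \<Longrightarrow> B \<in> carrier_mat n p \<Longrightarrow> i < m \<Longrightarrow> j < p \<Longrightarrow>
   (A * B) $$ (i,j) = (\<Sum>k<n. A $$ (i,k) * B $$ (k,j))"
  by (simp add: scalar_prod_def lessThan_atLeast0)

lemma upper_triangular_mult_entry_zero:
  fixes A B :: "'a::semiring_0 mat"
  assumes "A \<in> carrier_mat n n" "B \<in> carrier_mat n n" "upper_triangular A" "upper_triangular B"
    and "i < n" "k < n" "k < i \<or> j < k"
  shows "A $$ (i,k) * B $$ (k,j) = 0"
  using assms by (auto simp: upper_triangular_def)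

lemma upper_triangular_mult:
  assumes A: "A \<in> carrier_mat n n" and B: "B \<in> carrier_mat n n"
    and "upper_triangular A" "upper_triangular B"
  shows "upper_triangular (A * B)"
proof (rule upper_triangularI)
  fix i j assume "j < i" "i < dim_row (A * B)"
  then have ij: "j < i" "i < n" using A by auto
  have "(A * B) $$ (i,j) = (\<Sum>k<n. A $$ (i,k) * B $$ (k,j))"
    using ij index_mult_mat_sum[OF A B] by auto
  also have "\<dots> = 0"
    using ij by (intro sum.neutral ballI upper_triangular_mult_entry_zero[OF assms]) auto
  finally show "(A * B) $$ (i,j) = 0" .
qed

lemma diag_mult_upper_triangular:
  assumes A: "A \<in> carrier_mat n n" and B: "B \<in> carrier_mat n n"
    and "upper_triangular A" "upper_triangular B" and j: "j < n"
  shows "(A * B) $$ (j,j) = A $$ (j,j) * B $$ (j,j)"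
proof -
  have "(A * B) $$ (j,j) = (\<Sum>k<n. A $$ (j,k) * B $$ (k,j))"
    using j index_mult_mat_sum[OF A B] by auto
  also have "\<dots> = A $$ (j,j) * B $$ (j,j) + (\<Sum>k\<in>{..<n}-{j}. A $$ (j,k) * B $$ (k,j))"
    using j by (simp add: sum.remove)
  also have "(\<Sum>k\<in>{..<n}-{j}. A $$ (j,k) * B $$ (k,j)) = 0"
    using j by (intro sum.neutral ballI upper_triangular_mult_entry_zero[OF assms(1-4)]) auto
  finally show ?thesis by simp
qed

lemma upper_triangular_invertible:
  fixes A :: "'a::field mat"
  assumes A: "A \<in> carrier_mat n n" and "upper_triangular A" and "\<And>i. i < n \<Longrightarrow> A $$ (i,i) \<noteq> 0"
  obtains B where "B \<in> carrier_mat n n" "A * B = 1\<^sub>m n" "B * A = 1\<^sub>m n"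
proof -
  have "det A = prod_list (diag_mat A)" by (rule det_upper_triangular[OF assms(2) A])
  also have "\<dots> \<noteq> 0" unfolding prod_list_zero_iff diag_mat_def using A assms(3) by auto
  finally have "A \<in> Units (ring_mat TYPE('a) n ())" by (rule det_non_zero_imp_unit[OF A])
  then show ?thesis using that unfolding Units_def ring_mat_def by auto
qed

lemma mat_prod_list_Nil [simp]: "mat_prod_list n f [] = 1\<^sub>m n"
  by (simp add: mat_prod_list_def)

lemma mat_prod_list_Cons [simp]: "mat_prod_list n f (x # xs) = f x * mat_prod_list n f xs"
  by (simp add: mat_prod_list_def)

context
  fixes n :: nat and f :: "nat \<Rightarrow> 'a::comm_ring_1 mat"
  assumes f_carrier: "\<And>k. f k \<in> carrier_mat n n"
begin

lemma mat_prod_list_carrier: "mat_prod_list n f xs \<in> carrier_mat n n"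
  by (induction xs) (auto intro: mult_carrier_mat[OF f_carrier])

lemma mat_prod_list_append:
  "mat_prod_list n f (xs @ ys) = mat_prod_list n f xs * mat_prod_list n f ys"
proof (induction xs)
  case Nil
  show ?case by (simp add: left_mult_one_mat[OF mat_prod_list_carrier])
next
  case (Cons x xs)
  then show ?case
    using assoc_mult_mat[OF f_carrier mat_prod_list_carrier mat_prod_list_carrier] by simp
qed

lemma mat_prod_list_snoc: "mat_prod_list n f (xs @ [x]) = mat_prod_list n f xs * f x"
  using mat_prod_list_append[of xs "[x]"] f_carrier[of x] by simp

lemma mat_prod_list_commute:
  assumes A: "A \<in> carrier_mat n n" and comm: "\<And>k. A * f k = f k * A"
  shows "A * mat_prod_list n f xs = mat_prod_list n f xs * A"
proof (induction xs)
  case Nil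
  show ?case using A by simp
next
  case (Cons x xs)
  note P = mat_prod_list_carrier[of xs]
  have "A * (f x * mat_prod_list n f xs) = (A * f x) * mat_prod_list n f xs"
    using assoc_mult_mat[OF A f_carrier P] by simp
  also have "\<dots> = f x * (A * mat_prod_list n f xs)"
    unfolding comm using assoc_mult_mat[OF f_carrier A P] by simp
  also have "\<dots> = (f x * mat_prod_list n f xs) * A"
    unfolding Cons using assoc_mult_mat[OF f_carrier P A] by simp
  finally show ?case by simp
qed

lemma upper_triangular_mat_prod_list:
  "(\<And>k. upper_triangular (f k)) \<Longrightarrow> upper_triangular (mat_prod_list n f xs)"
  by (induction xs) (auto intro: upper_triangular_mult[OF f_carrier mat_prod_list_carrier])

lemma diag_mat_prod_list:
  assumes "\<And>k. upper_triangular (f k)" and "j < n"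
  shows "mat_prod_list n f xs $$ (j,j) = (\<Prod>k\<leftarrow>xs. f k $$ (j,j))"
  by (induction xs) (use assms in \<open>simp_all add: diag_mult_upper_triangular[OF f_carrier
        mat_prod_list_carrier _ upper_triangular_mat_prod_list]\<close>)

end

lemma mat_sum_list_carrier:
  "(\<And>k. f k \<in> carrier_mat n n) \<Longrightarrow> mat_sum_list n f xs \<in> carrier_mat n n"
  by (induction xs) (auto simp: mat_sum_list_def)

lemma index_mat_sum_list:
  assumes f: "\<And>k. f k \<in> carrier_mat n n" and "a < n" "c < n"
  shows "mat_sum_list n f xs $$ (a,c) = (\<Sum>i\<leftarrow>xs. f i $$ (a,c))"
proof (induction xs)
  case (Cons x xs)
  have "mat_sum_list n f (x # xs) = f x + mat_sum_list n f xs" by (simp add: mat_sum_list_def)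
  with Cons carrier_matD[OF mat_sum_list_carrier[where f=f, OF f, of xs]] assms(2,3)
  show ?case by simp
qed (use assms in \<open>simp add: mat_sum_list_def\<close>)

lemma mat_unit_carrier [simp]: "mat_unit n i j \<in> carrier_mat n n"
  by (simp add: mat_unit_def)

lemma index_mat_unit_diag_mult:
  fixes L :: "'a::comm_ring_1 mat"
  assumes L: "L \<in> carrier_mat n n" and "a < n" "c < n"
  shows "(mat_unit n i i * mat_diag n d * L) $$ (a,c) = (if a = i then d i * L $$ (a,c) else 0)"
proof -
  have U: "mat_unit n i i = mat_diag n (\<lambda>k. if k = i then 1 else 0)"
    by (rule eq_matI) (auto simp: mat_unit_def mat_diag_def)
  have "mat_unit n i i * mat_diag n d = mat_diag n (\<lambda>k. (if k = i then 1 else 0) * d k)"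
    unfolding U by (rule mat_diag_diag)
  then have "mat_unit n i i * mat_diag n d * L
      = mat n n (\<lambda>(a,c). ((if a = i then 1 else 0) * d a) * L $$ (a,c))"
    using mat_diag_mult_left[OF L] by simp
  then show ?thesis using assms(2,3) by simp
qed

lemma shift_mat_commute:
  fixes A :: "'a::comm_ring_1 mat"
  assumes A: "A \<in> carrier_mat n n"
  shows "(A + c \<cdot>\<^sub>m 1\<^sub>m n) * A = A * (A + c \<cdot>\<^sub>m 1\<^sub>m n)"
proof -
  have "(A + c \<cdot>\<^sub>m 1\<^sub>m n) * A = A * A + c \<cdot>\<^sub>m A"
    using A by (simp add: add_mult_distrib_mat mult_smult_assoc_mat[OF one_carrier_mat A])
  also have "\<dots> = A * (A + c \<cdot>\<^sub>m 1\<^sub>m n)"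
    using A by (simp add: mult_add_distrib_mat mult_smult_distrib[OF A one_carrier_mat])
  finally show ?thesis .
qed

definition char_factor :: "'a::comm_ring_1 mat \<Rightarrow> nat \<Rightarrow> 'a mat" where
  "char_factor r k = r - r $$ (k,k) \<cdot>\<^sub>m 1\<^sub>m (dim_row r)"

lemma char_factor_carrier [simp]: "r \<in> carrier_mat n n \<Longrightarrow> char_factor r k \<in> carrier_mat n n"
  unfolding char_factor_def by auto

lemma index_char_factor:
  "r \<in> carrier_mat n n \<Longrightarrow> i < n \<Longrightarrow> j < n \<Longrightarrow>
   char_factor r k $$ (i,j) = r $$ (i,j) - (if i = j then r $$ (k,k) else 0)"
  unfolding char_factor_def by auto

lemma char_factor_commute:
  assumes r: "r \<in> carrier_mat n n"
  shows "char_factor r a * char_factor r b = char_factor r b * char_factor r a"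
proof -
  have "char_factor r b = char_factor r a + (r $$ (a,a) - r $$ (b,b)) \<cdot>\<^sub>m 1\<^sub>m n"
    using r by (intro eq_matI) (auto simp: char_factor_def algebra_simps)
  then show ?thesis using shift_mat_commute[OF char_factor_carrier[OF r]] by metis
qed

lemma upper_triangular_char_factor:
  "r \<in> carrier_mat n n \<Longrightarrow> upper_triangular r \<Longrightarrow> upper_triangular (char_factor r k)"
  by (rule upper_triangularI) (auto simp: index_char_factor upper_triangular_def char_factor_def)

lemma char_factor_prod_carrier:
  "r \<in> carrier_mat n n \<Longrightarrow> mat_prod_list n (char_factor r) xs \<in> carrier_mat n n"
  by (rule mat_prod_list_carrier) simp

text \<open>Column \<open>c\<close> of \<open>M\<^sub>0 \<cdots> M\<^sub>m\<^sub>-\<^sub>1\<close> vanishes for \<open>c < m\<close>: for \<open>c < m - 1\<close> by induction, and the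
  new column \<open>m - 1\<close> because \<open>M\<^sub>m\<^sub>-\<^sub>1\<close> is zero on and below the diagonal in that column.\<close>
lemma char_factor_prod_cols_zero:
  assumes r: "r \<in> carrier_mat n n" and u: "upper_triangular r"
  shows "m \<le> n \<Longrightarrow> a < n \<Longrightarrow> c < m \<Longrightarrow> mat_prod_list n (char_factor r) [0..<m] $$ (a,c) = 0"
proof (induction m arbitrary: a c)
  case (Suc m)
  have M: "\<And>k. char_factor r k \<in> carrier_mat n n" using r by simp
  note P = char_factor_prod_carrier[OF r]
  have "mat_prod_list n (char_factor r) [0..<Suc m] $$ (a,c)
      = (\<Sum>l<n. mat_prod_list n (char_factor r) [0..<m] $$ (a,l) * char_factor r m $$ (l,c))"
    using Suc.prems by (simp add: mat_prod_list_snoc[OF M] index_mult_mat_sum[OF P M])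
  also have "\<dots> = 0"
  proof (intro sum.neutral ballI)
    fix l assume l: "l \<in> {..<n}"
    have "mat_prod_list n (char_factor r) [0..<m] $$ (a,l) = 0 \<or> char_factor r m $$ (l,c) = 0"
    proof (cases "l < m \<or> c < l")
      case True
      with Suc l u r show ?thesis by (auto simp: index_char_factor upper_triangular_def)
    next
      case False
      then have "l = m" "c = m" using Suc.prems by auto
      with Suc.prems r show ?thesis by (simp add: index_char_factor)
    qed
    then show "mat_prod_list n (char_factor r) [0..<m] $$ (a,l) * char_factor r m $$ (l,c) = 0"
      by auto
  qed
  finally show ?case .
qed simp

lemma char_factor_prod_eq_zero:
  assumes r: "r \<in> carrier_mat n n" and "upper_triangular r"
  shows "mat_prod_list n (char_factor r) [0..<n] = 0\<^sub>m n n"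
  using char_factor_prod_cols_zero[OF assms le_refl]
    char_factor_prod_carrier[OF r]
  by (intro eq_matI) auto

lemma filter_neq_upt:
  assumes "i < n"
  shows "filter (\<lambda>k. k \<noteq> i) [0..<n] = [0..<i] @ [Suc i..<n]"
  and "[0..<n] = [0..<i] @ [i] @ [Suc i..<n]"
proof -
  show split: "[0..<n] = [0..<i] @ [i] @ [Suc i..<n]"
    using upt_add_eq_append[of 0 i "n - i"] upt_conv_Cons[of i n] assms by simp
  show "filter (\<lambda>k. k \<noteq> i) [0..<n] = [0..<i] @ [Suc i..<n]"
    by (subst split) (simp add: filter_id_conv)
qed

lemma Lprod_eq_char_factor_prod:
  "r \<in> carrier_mat n n \<Longrightarrow> Lprod i r = mat_prod_list n (char_factor r) (filter (\<lambda>k. k \<noteq> i) [0..<n])"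
  unfolding Lprod_def char_factor_def[abs_def] by simp

lemma Lprod_carrier: "r \<in> carrier_mat n n \<Longrightarrow> Lprod i r \<in> carrier_mat n n"
  unfolding Lprod_eq_char_factor_prod by (rule mat_prod_list_carrier) simp

lemma Lprod_mult_char_factor:
  assumes r: "r \<in> carrier_mat n n" and u: "upper_triangular r" and i: "i < n"
  shows "Lprod i r * char_factor r i = 0\<^sub>m n n"
proof -
  have M: "\<And>k. char_factor r k \<in> carrier_mat n n" using r by simp
  define A where "A = mat_prod_list n (char_factor r) [0..<i]"
  define B where "B = mat_prod_list n (char_factor r) [Suc i..<n]"
  have A: "A \<in> carrier_mat n n" and B: "B \<in> carrier_mat n n"
    unfolding A_def B_def by (auto intro: char_factor_prod_carrier[OF r])
  have "B * char_factor r i = char_factor r i * B"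
    unfolding B_def by (rule mat_prod_list_commute[OF M M, symmetric], rule char_factor_commute[OF r])
  then have "Lprod i r * char_factor r i = (A * char_factor r i) * B"
    unfolding Lprod_eq_char_factor_prod[OF r] filter_neq_upt(1)[OF i] mat_prod_list_append[OF M]
      A_def[symmetric] B_def[symmetric]
    using assoc_mult_mat[OF A B M] assoc_mult_mat[OF A M B] by simp
  also have "\<dots> = mat_prod_list n (char_factor r) (([0..<i] @ [i]) @ [Suc i..<n])"
    unfolding mat_prod_list_append[OF M] A_def B_def by (simp add: right_mult_one_mat[OF M])
  also have "\<dots> = mat_prod_list n (char_factor r) [0..<n]"
    using filter_neq_upt(2)[OF i] by simp
  finally show ?thesis using char_factor_prod_eq_zero[OF r u] by simp
qed

lemma Lprod_mult_eq_smult: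
  assumes r: "r \<in> carrier_mat n n" and u: "upper_triangular r" and i: "i < n"
  shows "Lprod i r * r = r $$ (i,i) \<cdot>\<^sub>m Lprod i r"
proof -
  note P = Lprod_carrier[OF r, of i]
  have "Lprod i r * r - r $$ (i,i) \<cdot>\<^sub>m Lprod i r = Lprod i r * char_factor r i"
    unfolding char_factor_def using r P
    by (simp add: mult_minus_distrib_mat[OF P r] mult_smult_distrib[OF P one_carrier_mat])
  also have "\<dots> = 0\<^sub>m n n" by (rule Lprod_mult_char_factor[OF r u i])
  finally have zero: "Lprod i r * r - r $$ (i,i) \<cdot>\<^sub>m Lprod i r = 0\<^sub>m n n" .
  show ?thesis
  proof (rule eq_matI)
    fix a c assume "a < dim_row (r $$ (i,i) \<cdot>\<^sub>m Lprod i r)" "c < dim_col (r $$ (i,i) \<cdot>\<^sub>m Lprod i r)"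
    with P have "a < n" "c < n" by auto
    with arg_cong[OF zero, of "\<lambda>A. A $$ (a,c)"] P r
    show "(Lprod i r * r) $$ (a,c) = (r $$ (i,i) \<cdot>\<^sub>m Lprod i r) $$ (a,c)" by simp
  qed (use P r in auto)
qed

lemma upper_triangular_Lprod:
  "r \<in> carrier_mat n n \<Longrightarrow> upper_triangular r \<Longrightarrow> upper_triangular (Lprod i r)"
  unfolding Lprod_eq_char_factor_prod
  by (rule upper_triangular_mat_prod_list) (auto intro: upper_triangular_char_factor)

lemma diag_Lprod:
  assumes r: "r \<in> carrier_mat n n" and u: "upper_triangular r" and j: "j < n"
  shows "Lprod i r $$ (j,j) = (\<Prod>k\<leftarrow>filter (\<lambda>k. k \<noteq> i) [0..<n]. r $$ (j,j) - r $$ (k,k))"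
  unfolding Lprod_eq_char_factor_prod[OF r]
  using diag_mat_prod_list[OF char_factor_carrier[OF r] upper_triangular_char_factor[OF r u] j]
  by (simp add: index_char_factor[OF r j j])

lemma diag_Lprod_eq_zero:
  assumes r: "r \<in> carrier_mat n n" and u: "upper_triangular r" and "j < n" "j \<noteq> i"
  shows "Lprod i r $$ (j,j) = 0"
  unfolding diag_Lprod[OF r u \<open>j < n\<close>] prod.distinct_set_conv_list[symmetric, OF distinct_filter[OF distinct_upt]]
  using assms(3,4) by (intro prod_zero) auto

lemma mat_trace_Lprod:
  assumes r: "r \<in> carrier_mat n n" and u: "upper_triangular r" and i: "i < n"
  shows "mat_trace (Lprod i r) = Lprod i r $$ (i,i)"
proof -
  have "mat_trace (Lprod i r) = (\<Sum>j<n. Lprod i r $$ (j,j))"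
    unfolding mat_trace_def by (simp add: carrier_matD[OF Lprod_carrier[OF r]])
  also have "\<dots> = Lprod i r $$ (i,i) + (\<Sum>j\<in>{..<n}-{i}. Lprod i r $$ (j,j))"
    using i by (simp add: sum.remove)
  also have "(\<Sum>j\<in>{..<n}-{i}. Lprod i r $$ (j,j)) = 0"
    by (intro sum.neutral ballI) (auto intro: diag_Lprod_eq_zero[OF r u])
  finally show ?thesis by simp
qed

lemma diag_Lprod_nonzero:
  fixes r :: "'a::idom mat"
  assumes r: "r \<in> carrier_mat n n" and u: "upper_triangular r" and i: "i < n"
    and dist: "\<forall>i<n. \<forall>j<n. i \<noteq> j \<longrightarrow> r $$ (i,i) \<noteq> r $$ (j,j)"
  shows "Lprod i r $$ (i,i) \<noteq> 0"
  using dist i by (auto simp: diag_Lprod[OF r u i])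

definition diagonalizer :: "nat \<Rightarrow> (nat \<Rightarrow> 'a::field) \<Rightarrow> 'a mat \<Rightarrow> 'a mat" where
  "diagonalizer n d r = mat_sum_list n (\<lambda>\<iota>. mat_unit n \<iota> \<iota> * mat_diag n d * Lmat \<iota> r) [0..<n]"

lemma diagonalizer_carrier:
  assumes r: "r \<in> carrier_mat n n"
  shows "diagonalizer n d r \<in> carrier_mat n n"
  unfolding diagonalizer_def Lmat_def
  by (intro mat_sum_list_carrier mult_carrier_mat[of _ n n] smult_carrier_mat Lprod_carrier[OF r])
    (auto simp: mat_unit_def)

lemma index_diagonalizer:
  assumes r: "r \<in> carrier_mat n n" and u: "upper_triangular r" and ac: "a < n" "c < n"
  shows "diagonalizer n d r $$ (a,c) = d a * Lprod a r $$ (a,c) / Lprod a r $$ (a,a)"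
proof -
  have L: "Lmat i r \<in> carrier_mat n n" for i
    unfolding Lmat_def using Lprod_carrier[OF r] by simp
  have F: "mat_unit n i i * mat_diag n d * Lmat i r \<in> carrier_mat n n" for i
    by (rule mult_carrier_mat[OF mult_carrier_mat[OF mat_unit_carrier mat_diag_dim] L])
  have "diagonalizer n d r $$ (a,c) = (\<Sum>i\<leftarrow>[0..<n]. (mat_unit n i i * mat_diag n d * Lmat i r) $$ (a,c))"
    unfolding diagonalizer_def by (rule index_mat_sum_list[OF F ac])
  also have "\<dots> = (\<Sum>i\<leftarrow>[0..<n]. if a = i then d i * Lmat i r $$ (a,c) else 0)"
    by (simp add: index_mat_unit_diag_mult[OF L ac])
  also have "\<dots> = d a * Lmat a r $$ (a,c)"
    using ac by (simp add: interv_sum_list_conv_sum_set_nat)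
  also have "\<dots> = d a * Lprod a r $$ (a,c) / Lprod a r $$ (a,a)"
    unfolding Lmat_def mat_trace_Lprod[OF r u ac(1)] using ac
    by (simp add: carrier_matD[OF Lprod_carrier[OF r]] field_simps)
  finally show ?thesis .
qed

lemma upper_triangular_diagonalizer:
  assumes r: "r \<in> carrier_mat n n" and u: "upper_triangular r"
  shows "upper_triangular (diagonalizer n d r)"
proof (rule upper_triangularI)
  fix i j assume "j < i" "i < dim_row (diagonalizer n d r)"
  with carrier_matD[OF diagonalizer_carrier[OF r]] have ij: "j < i" "i < n" by auto
  then have "Lprod i r $$ (i,j) = 0"
    using upper_triangularD[OF upper_triangular_Lprod[OF r u]] carrier_matD(1)[OF Lprod_carrier[OF r]]
    by simp
  then show "diagonalizer n d r $$ (i,j) = 0" using ij by (simp add: index_diagonalizer[OF r u])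
qed

lemma diag_diagonalizer:
  assumes r: "r \<in> carrier_mat n n" and u: "upper_triangular r" and i: "i < n"
    and dist: "\<forall>i<n. \<forall>j<n. i \<noteq> j \<longrightarrow> r $$ (i,i) \<noteq> r $$ (j,j)"
  shows "diagonalizer n d r $$ (i,i) = d i"
  using diag_Lprod_nonzero[OF r u i dist] by (simp add: index_diagonalizer[OF r u i i])

lemma diagonalizer_mult:
  assumes r: "r \<in> carrier_mat n n" and u: "upper_triangular r"
  shows "diagonalizer n d r * r = mat_diag n (\<lambda>i. r $$ (i,i)) * diagonalizer n d r"
proof (rule eq_matI)
  note B = diagonalizer_carrier[where d=d, OF r]
  fix a c assume "a < dim_row (mat_diag n (\<lambda>i. r $$ (i,i)) * diagonalizer n d r)"
    "c < dim_col (mat_diag n (\<lambda>i. r $$ (i,i)) * diagonalizer n d r)"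
  then have ac: "a < n" "c < n" using B by (auto simp: mat_diag_def)
  have "(diagonalizer n d r * r) $$ (a,c)
      = d a / Lprod a r $$ (a,a) * (\<Sum>j<n. Lprod a r $$ (a,j) * r $$ (j,c))"
    by (simp add: index_mult_mat_sum[OF B r ac] index_diagonalizer[OF r u ac(1)] sum_distrib_left
        mult_ac)
  also have "(\<Sum>j<n. Lprod a r $$ (a,j) * r $$ (j,c)) = r $$ (a,a) * Lprod a r $$ (a,c)"
    using Lprod_mult_eq_smult[OF r u ac(1)] index_mult_mat_sum[OF Lprod_carrier[OF r] r ac]
      Lprod_carrier[OF r] ac by (metis carrier_matD index_smult_mat(1))
  finally show "(diagonalizer n d r * r) $$ (a,c)
      = (mat_diag n (\<lambda>i. r $$ (i,i)) * diagonalizer n d r) $$ (a,c)"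
    using ac B by (simp add: mat_diag_mult_left[OF B] index_diagonalizer[OF r u ac])
qed (use r carrier_matD[OF diagonalizer_carrier[OF r]] in \<open>auto simp: mat_diag_def\<close>)

fun path_weight :: "(nat \<Rightarrow> nat \<Rightarrow> 'a::comm_semiring_1) \<Rightarrow> nat \<Rightarrow> nat list \<Rightarrow> nat \<Rightarrow> 'a" where
  "path_weight e a [] c = e a c"
| "path_weight e a (k # ks) c = e a k * path_weight e k ks c"

lemma path_weight_snoc: "path_weight e a (ks @ [j]) c = path_weight e a ks j * e j c"
  by (induction ks arbitrary: a) (auto simp: mult.assoc)

lemma path_weight_conv_nth:
  assumes "ks \<noteq> []"
  shows "path_weight e a ks c
    = e a (ks!0) * e (ks!(length ks - 1)) c * (\<Prod>u=1..length ks - 1. e (ks!(u-1)) (ks!u))"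
  using assms
proof (induction ks arbitrary: a)
  case (Cons k ks)
  show ?case
  proof (cases "ks = []")
    case False
    then obtain m where m: "length ks = Suc m" by (cases ks) auto
    let ?F = "\<lambda>u. e ((k#ks)!(u-1)) ((k#ks)!u)"
    have "(\<Prod>u=1..length (k#ks) - 1. ?F u) = (\<Prod>u=1..Suc m. ?F u)"
      by (simp only: length_Cons diff_Suc_1 m)
    also have "\<dots> = ?F 1 * (\<Prod>u=Suc 1..Suc m. ?F u)"
      by (rule prod.atLeast_Suc_atMost) simp
    also have "(\<Prod>u=Suc 1..Suc m. ?F u) = (\<Prod>u=1..m. ?F (Suc u))"
      by (rule prod.shift_bounds_cl_Suc_ivl)
    also have "\<dots> = (\<Prod>u=1..length ks - 1. e (ks!(u-1)) (ks!u))"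
      unfolding m by (rule prod.cong) (auto simp: nth_Cons')
    finally have "(\<Prod>u=1..length (k#ks) - 1. ?F u)
        = e k (ks!0) * (\<Prod>u=1..length ks - 1. e (ks!(u-1)) (ks!u))" by simp
    moreover have "(k#ks)!(length (k#ks) - 1) = ks!(length ks - 1)" using m by simp
    ultimately show ?thesis using Cons.IH[OF False] by (simp add: mult_ac)
  qed simp
qed simp

text \<open>The weighted sum over all increasing chains \<open>a < k\<^sub>1 < \<dots> < k\<^sub>v < c\<close>, each chain given by
  its set of intermediate points.\<close>
definition path_sum :: "(nat \<Rightarrow> nat \<Rightarrow> 'a::comm_semiring_1) \<Rightarrow> nat \<Rightarrow> nat \<Rightarrow> 'a" where
  "path_sum e a c = (\<Sum>S\<in>Pow {a<..<c}. path_weight e a (sorted_list_of_set S) c)"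

lemma sorted_list_of_set_insert_greater:
  assumes "finite S" "\<forall>x\<in>S. x < (j::nat)"
  shows "sorted_list_of_set (insert j S) = sorted_list_of_set S @ [j]"
proof -
  have "j \<notin> S" using assms by auto
  then have "sorted_wrt (<) (sorted_list_of_set S @ [j]) \<and> set (sorted_list_of_set S @ [j]) = insert j S
     \<and> length (sorted_list_of_set S @ [j]) = card (insert j S)"
    using assms by (auto simp: sorted_wrt_append)
  then show ?thesis using sorted_list_of_set_unique[of "insert j S"] assms(1) by blast
qed

lemma sum_nonempty_subsets_by_Max:
  fixes a c :: nat
  shows "(\<Sum>S\<in>Pow {a<..<c} - {{}}. h S) = (\<Sum>j\<in>{a<..<c}. \<Sum>T\<in>Pow {a<..<j}. h (insert j T))"
proof -
  have "(\<Sum>S\<in>Pow {a<..<c} - {{}}. h S) = (\<Sum>p\<in>Sigma {a<..<c} (\<lambda>j. Pow {a<..<j}). h (insert (fst p) (snd p)))"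
  proof (rule sum.reindex_bij_witness[where i="\<lambda>p. insert (fst p) (snd p)" and j="\<lambda>S. (Max S, S - {Max S})"])
    fix S assume S: "S \<in> Pow {a<..<c} - {{}}"
    then have fin: "finite S" "S \<noteq> {}" by (auto intro: finite_subset)
    show "insert (fst (Max S, S - {Max S})) (snd (Max S, S - {Max S})) = S"
      using fin Max_in by auto
    show "(Max S, S - {Max S}) \<in> Sigma {a<..<c} (\<lambda>j. Pow {a<..<j})"
      using S fin Max_in[OF fin] Max_ge[OF fin(1)] by fastforce
    show "h (insert (fst (Max S, S - {Max S})) (snd (Max S, S - {Max S}))) = h S"
      using fin Max_in by (simp add: insert_absorb)
  next
    fix p assume "p \<in> Sigma {a<..<c} (\<lambda>j. Pow {a<..<j})"
    then obtain j T where p: "p = (j, T)" "j \<in> {a<..<c}" "T \<subseteq> {a<..<j}" by auto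
    then have "Max (insert j T) = j" using finite_subset[OF p(3)] by (auto intro!: Max_eqI)
    with p show "(Max (insert (fst p) (snd p)), insert (fst p) (snd p) - {Max (insert (fst p) (snd p))}) = p"
      "insert (fst p) (snd p) \<in> Pow {a<..<c} - {{}}" by auto
  qed
  also have "\<dots> = (\<Sum>j\<in>{a<..<c}. \<Sum>T\<in>Pow {a<..<j}. h (insert j T))"
    by (subst sum.Sigma) (auto simp: split_beta)
  finally show ?thesis .
qed

lemma path_sum_split_empty:
  "path_sum e a c = e a c + (\<Sum>S\<in>Pow {a<..<c} - {{}}. path_weight e a (sorted_list_of_set S) c)"
  unfolding path_sum_def by (subst sum.remove[of _ "{}"]) auto

text \<open>Split off the last intermediate point of each chain.\<close>
lemma path_sum_rec: "path_sum e a c = e a c + (\<Sum>j\<in>{a<..<c}. path_sum e a j * e j c)"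
proof -
  have last: "path_weight e a (sorted_list_of_set (insert j T)) c = path_weight e a (sorted_list_of_set T) j * e j c"
    if "T \<subseteq> {a<..<j}" for j T
    using that finite_subset[OF that]
    by (subst sorted_list_of_set_insert_greater) (auto simp: path_weight_snoc)
  have "path_sum e a c
      = e a c + (\<Sum>j\<in>{a<..<c}. \<Sum>T\<in>Pow {a<..<j}. path_weight e a (sorted_list_of_set (insert j T)) c)"
    unfolding path_sum_split_empty[of e a c] sum_nonempty_subsets_by_Max ..
  also have "\<dots> = e a c + (\<Sum>j\<in>{a<..<c}. \<Sum>T\<in>Pow {a<..<j}. path_weight e a (sorted_list_of_set T) j * e j c)"
    using last by (intro arg_cong[where f="(+) _"] sum.cong) auto
  finally show ?thesis unfolding path_sum_def sum_distrib_right .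
qed

lemma path_sum_unique:
  assumes rec: "\<And>c. a < c \<Longrightarrow> c < n \<Longrightarrow> y c = x * e a c + (\<Sum>j\<in>{a<..<c}. y j * e j c)"
  shows "a < c \<Longrightarrow> c < n \<Longrightarrow> y c = x * path_sum e a c"
proof (induction c rule: less_induct)
  case (less c)
  have "y c = x * e a c + (\<Sum>j\<in>{a<..<c}. y j * e j c)" by (rule rec[OF less.prems])
  also have "(\<Sum>j\<in>{a<..<c}. y j * e j c) = (\<Sum>j\<in>{a<..<c}. x * path_sum e a j * e j c)"
    using less by (intro sum.cong) auto
  also have "x * e a c + \<dots> = x * path_sum e a c"
    unfolding path_sum_rec[of e a c] distrib_left sum_distrib_left mult.assoc ..
  finally show ?case .
qed

lemma path_sum_by_card:
  assumes g: "\<And>v S. v \<ge> 1 \<Longrightarrow> S \<subseteq> {a<..<c} \<Longrightarrow> card S = v \<Longrightarrow> g v S = path_weight e a (sorted_list_of_set S) c"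
  shows "path_sum e a c = e a c + (\<Sum>v=1..c - a - 1. \<Sum>S\<in>{S. S \<subseteq> {a<..<c} \<and> card S = v}. g v S)"
proof -
  have "(\<Sum>v=1..c - a - 1. \<Sum>S\<in>{S. S \<subseteq> {a<..<c} \<and> card S = v}. g v S)
      = (\<Sum>v=1..c - a - 1. \<Sum>S\<in>{S \<in> Pow {a<..<c} - {{}}. card S = v}. path_weight e a (sorted_list_of_set S) c)"
  proof (rule sum.cong[OF refl])
    fix v assume v: "v \<in> {1..c - a - 1}"
    then have "{S. S \<subseteq> {a<..<c} \<and> card S = v} = {S \<in> Pow {a<..<c} - {{}}. card S = v}" by auto
    then show "(\<Sum>S\<in>{S. S \<subseteq> {a<..<c} \<and> card S = v}. g v S)
        = (\<Sum>S\<in>{S \<in> Pow {a<..<c} - {{}}. card S = v}. path_weight e a (sorted_list_of_set S) c)"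
      using g v by (auto intro!: sum.cong)
  qed
  also have "\<dots> = (\<Sum>S\<in>Pow {a<..<c} - {{}}. path_weight e a (sorted_list_of_set S) c)"
  proof (rule sum.group)
    show "card ` (Pow {a<..<c} - {{}}) \<subseteq> {1..c - a - 1}"
    proof
      fix x assume "x \<in> card ` (Pow {a<..<c} - {{}})"
      then obtain S where S: "S \<subseteq> {a<..<c}" "S \<noteq> {}" "x = card S" by auto
      then have "card S \<ge> 1" using finite_subset[OF S(1)] by (simp add: Suc_leI card_gt_0_iff)
      moreover have "card S \<le> card {a<..<c}" using card_mono[OF _ S(1)] by simp
      ultimately show "x \<in> {1..c - a - 1}" using S by simp
    qed
  qed auto
  finally show ?thesis using path_sum_split_empty[of e a c] by simp
qed


lemma path_sum_ratio_expansion: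
  fixes r :: "'a::field mat"
  shows "path_sum (\<lambda>a c. r $$ (a,c) / (r $$ (\<iota>,\<iota>) - r $$ (c,c))) \<iota> \<gamma>
    = r $$ (\<iota>,\<gamma>) / (r $$ (\<iota>,\<iota>) - r $$ (\<gamma>,\<gamma>))
       + (\<Sum>v = 1..\<gamma> - \<iota> - 1.
            \<Sum>S \<in> {S. S \<subseteq> {\<iota><..<\<gamma>} \<and> card S = v}.
              (let ks = sorted_list_of_set S in
                r $$ (\<iota>, ks ! 0) * r $$ (ks ! (v - 1), \<gamma>)
                  / ((r $$ (\<iota>,\<iota>) - r $$ (ks ! 0, ks ! 0)) * (r $$ (\<iota>,\<iota>) - r $$ (\<gamma>,\<gamma>)))
                * (\<Prod>u = 1..v - 1. r $$ (ks ! (u - 1), ks ! u)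
                      / (r $$ (\<iota>,\<iota>) - r $$ (ks ! u, ks ! u)))))"
proof (rule path_sum_by_card)
  fix v S assume vS: "v \<ge> 1" "S \<subseteq> {\<iota><..<\<gamma>}" "card S = v"
  then have "length (sorted_list_of_set S) = v" "sorted_list_of_set S \<noteq> []"
    using finite_subset[OF vS(2)] by auto
  then show "(let ks = sorted_list_of_set S in
                r $$ (\<iota>, ks ! 0) * r $$ (ks ! (v - 1), \<gamma>)
                  / ((r $$ (\<iota>,\<iota>) - r $$ (ks ! 0, ks ! 0)) * (r $$ (\<iota>,\<iota>) - r $$ (\<gamma>,\<gamma>)))
                * (\<Prod>u = 1..v - 1. r $$ (ks ! (u - 1), ks ! u)
                      / (r $$ (\<iota>,\<iota>) - r $$ (ks ! u, ks ! u))))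
      = path_weight (\<lambda>a c. r $$ (a,c) / (r $$ (\<iota>,\<iota>) - r $$ (c,c))) \<iota> (sorted_list_of_set S) \<gamma>"
    by (simp add: path_weight_conv_nth Let_def times_divide_times_eq)
qed

lemma row_recursion_of_intertwiner:
  fixes B r :: "'a::comm_ring_1 mat"
  assumes B: "B \<in> carrier_mat n n" and r: "r \<in> carrier_mat n n"
    and uB: "upper_triangular B" and ur: "upper_triangular r"
    and Br: "B * r = mat_diag n (\<lambda>i. r $$ (i,i)) * B"
    and ic: "\<iota> < c" "c < n"
  shows "(r $$ (\<iota>,\<iota>) - r $$ (c,c)) * B $$ (\<iota>,c)
    = B $$ (\<iota>,\<iota>) * r $$ (\<iota>,c) + (\<Sum>j\<in>{\<iota><..<c}. B $$ (\<iota>,j) * r $$ (j,c))"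
proof -
  have "r $$ (\<iota>,\<iota>) * B $$ (\<iota>,c) = (B * r) $$ (\<iota>,c)"
    using ic B by (simp add: Br mat_diag_mult_left[OF B])
  also have "\<dots> = (\<Sum>j\<in>{\<iota>..c}. B $$ (\<iota>,j) * r $$ (j,c))"
    unfolding index_mult_mat_sum[OF B r order.strict_trans[OF ic] ic(2)]
  proof (rule sum.mono_neutral_right)
    show "\<forall>j\<in>{..<n} - {\<iota>..c}. B $$ (\<iota>,j) * r $$ (j,c) = 0"
      using ic B r uB ur by (auto simp: upper_triangular_def not_le)
  qed (use ic in auto)
  also have "{\<iota>..c} = insert \<iota> (insert c {\<iota><..<c})" using ic by auto
  finally show ?thesis using ic by (simp add: algebra_simps)
qed

lemma intertwiner_entry_eq_path_sum:
  fixes B r :: "'a::field mat"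
  assumes B: "B \<in> carrier_mat n n" and r: "r \<in> carrier_mat n n"
    and uB: "upper_triangular B" and ur: "upper_triangular r"
    and dist: "\<forall>i<n. \<forall>j<n. i \<noteq> j \<longrightarrow> r $$ (i,i) \<noteq> r $$ (j,j)"
    and Br: "B * r = mat_diag n (\<lambda>i. r $$ (i,i)) * B"
    and "\<iota> < \<gamma>" "\<gamma> < n"
  shows "B $$ (\<iota>,\<gamma>) = B $$ (\<iota>,\<iota>) * path_sum (\<lambda>a c. r $$ (a,c) / (r $$ (\<iota>,\<iota>) - r $$ (c,c))) \<iota> \<gamma>"
proof (rule path_sum_unique[OF _ assms(7,8)])
  fix c assume ic: "\<iota> < c" "c < n"
  define D where "D = r $$ (\<iota>,\<iota>) - r $$ (c,c)"
  have "D \<noteq> 0" using dist ic unfolding D_def by auto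
  have "B $$ (\<iota>,\<iota>) * (r $$ (\<iota>,c) / D) + (\<Sum>j\<in>{\<iota><..<c}. B $$ (\<iota>,j) * (r $$ (j,c) / D))
      = (B $$ (\<iota>,\<iota>) * r $$ (\<iota>,c) + (\<Sum>j\<in>{\<iota><..<c}. B $$ (\<iota>,j) * r $$ (j,c))) / D"
    by (simp add: sum_divide_distrib add_divide_distrib)
  also have "\<dots> = B $$ (\<iota>,c)"
    using row_recursion_of_intertwiner[OF B r uB ur Br ic, folded D_def, symmetric] \<open>D \<noteq> 0\<close>
    by simp
  finally show "B $$ (\<iota>,c) = B $$ (\<iota>,\<iota>) * (r $$ (\<iota>,c) / D)
      + (\<Sum>j\<in>{\<iota><..<c}. B $$ (\<iota>,j) * (r $$ (j,c) / D))" by simp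
qed

theorem mainTheorem16:
  fixes n :: nat and r :: "complex mat" and d :: "nat \<Rightarrow> complex"
  assumes r_carrier: "r \<in> carrier_mat n n"
    and r_upper: "upper_triangular r"
    and r_distinct: "\<forall>i<n. \<forall>j<n. i \<noteq> j \<longrightarrow> r $$ (i,i) \<noteq> r $$ (j,j)"
    and d_nonzero: "\<forall>i<n. d i \<noteq> 0"
  defines "b \<equiv> mat_sum_list n (\<lambda>\<iota>. mat_unit n \<iota> \<iota> * mat_diag n d * Lmat \<iota> r) [0..<n]"
  shows "b \<in> carrier_mat n n \<and> upper_triangular b \<and> invertible_mat b
     \<and> (\<forall>i<n. b $$ (i,i) = d i)
     \<and> (\<exists>binv \<in> carrier_mat n n. b * binv = 1\<^sub>m n \<and> binv * b = 1\<^sub>m n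
          \<and> b * r * binv = mat_diag n (\<lambda>i. r $$ (i,i)))
     \<and> (\<forall>\<iota><n. \<forall>\<gamma><n. \<gamma> < \<iota> \<longrightarrow> b $$ (\<iota>,\<gamma>) = 0)
     \<and> (\<forall>\<iota><n. \<forall>\<gamma><n. \<iota> < \<gamma> \<longrightarrow>
          b $$ (\<iota>,\<gamma>) = d \<iota> *
            (r $$ (\<iota>,\<gamma>) / (r $$ (\<iota>,\<iota>) - r $$ (\<gamma>,\<gamma>))
             + (\<Sum>v = 1..\<gamma> - \<iota> - 1.
                  \<Sum>S \<in> {S. S \<subseteq> {\<iota><..<\<gamma>} \<and> card S = v}.
                    (let ks = sorted_list_of_set S in
                      r $$ (\<iota>, ks ! 0) * r $$ (ks ! (v - 1), \<gamma>)
                        / ((r $$ (\<iota>,\<iota>) - r $$ (ks ! 0, ks ! 0)) * (r $$ (\<iota>,\<iota>) - r $$ (\<gamma>,\<gamma>)))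
                      * (\<Prod>u = 1..v - 1. r $$ (ks ! (u - 1), ks ! u)
                            / (r $$ (\<iota>,\<iota>) - r $$ (ks ! u, ks ! u)))))))"
proof -
  note r = r_carrier and u = r_upper
  have b: "b = diagonalizer n d r" unfolding b_def diagonalizer_def ..
  have B: "b \<in> carrier_mat n n" and ub: "upper_triangular b"
    and db: "\<forall>i<n. b $$ (i,i) = d i" and br: "b * r = mat_diag n (\<lambda>i. r $$ (i,i)) * b"
    unfolding b using diagonalizer_carrier[OF r] upper_triangular_diagonalizer[OF r u]
      diag_diagonalizer[OF r u _ r_distinct] diagonalizer_mult[OF r u] by auto
  obtain binv where binv: "binv \<in> carrier_mat n n" "b * binv = 1\<^sub>m n" "binv * b = 1\<^sub>m n"
    using upper_triangular_invertible[OF B ub] db d_nonzero by metis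
  then have "invertible_mat b"
    using B unfolding invertible_mat_def inverts_mat_def by auto
  moreover have "b * r * binv = mat_diag n (\<lambda>i. r $$ (i,i))"
    using B binv by (simp add: br assoc_mult_mat[OF mat_diag_dim B binv(1)] right_mult_one_mat[OF mat_diag_dim])
  moreover have "\<forall>\<iota><n. \<forall>\<gamma><n. \<gamma> < \<iota> \<longrightarrow> b $$ (\<iota>,\<gamma>) = 0"
    using ub B by auto
  moreover have "b $$ (\<iota>,\<gamma>) = d \<iota> * path_sum (\<lambda>a c. r $$ (a,c) / (r $$ (\<iota>,\<iota>) - r $$ (c,c))) \<iota> \<gamma>"
    if "\<iota> < \<gamma>" "\<gamma> < n" for \<iota> \<gamma>
    using intertwiner_entry_eq_path_sum[OF B r ub u r_distinct br that] db that by simp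
  ultimately show ?thesis
    unfolding path_sum_ratio_expansion using B ub db binv by blast
qed

end
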